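(* Let $n\neq 1$ be a real number, $k_n=n-1$, and $k_0,k_1,k_2\in\mathbb{R}$. On the phase space with canonical coordinates $(r,\phi,p_r,p_\phi)$, $r>0$, restricted to the open set where $\cos(k_n\phi)\neq 0$, consider $$H_{nb}=\tfrac12 r^{2n}\Big(p_r^2+\tfrac{p_\phi^2}{r^2}\Big)+\frac{k_0}{r^{2k_n}}\big(\cos^2(k_n\phi)+4\sin^2(k_n\phi)\big)+r^{2k_n}\frac{k_1}{\cos^2(k_n\phi)}+\frac{k_2}{r^{k_n}}\sin(k_n\phi).$$ With $P_1=r^n\big(p_r\cos(k_n\phi)+\tfrac1r p_\phi\sin(k_n\phi)\big)$ and $P_2=r^n\big(p_r\sin(k_n\phi)-\tfrac1r p_\phi\cos(k_n\phi)\big)$, the functions $$J_{b1}=P_1^2+\frac{2k_0}{r^{2k_n}}\cos^2(k_n\phi)+2k_1r^{2k_n}\sec^2(k_n\phi),\qquad J_{b2}=P_2^2+\frac{8k_0}{r^{2k_n}}\sin^2(k_n\phi)+\frac{2k_2}{r^{k_n}}\sin(k_n\phi),$$ $$J_{b3}=P_1p_\phi-\frac{k_0}{r^{3k_n}}\cos(k_n\phi)\sin(2k_n\phi)+k_1r^{k_n}\sec^3(k_n\phi)\sin(2k_n\phi)-\frac{k_2}{2r^{2k_n}}\cos^2(k_n\phi)$$ are three independent constants of motion of $H_{nb}$, i.e. $\{J_{bj},H_{nb}\}=0$ for $j=1,2,3$; hence $H_{nb}$ is superintegrable.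
   Context: The Poisson bracket is the canonical one in $(r,\phi,p_r,p_\phi)$. A constant of motion of $H$ is a function $F$ with $\{F,H\}=0$. *)

theory Defs
  imports "HOL-Analysis.Analysis"
begin

type_synonym psfun = "real \<Rightarrow> real \<Rightarrow> real \<Rightarrow> real \<Rightarrow> real"

definition d_r :: "psfun \<Rightarrow> psfun" where
  "d_r F r ph pr pph = deriv (\<lambda>t. F t ph pr pph) r"
definition d_phi :: "psfun \<Rightarrow> psfun" where
  "d_phi F r ph pr pph = deriv (\<lambda>t. F r t pr pph) ph"
definition d_pr :: "psfun \<Rightarrow> psfun" where
  "d_pr F r ph pr pph = deriv (\<lambda>t. F r ph t pph) pr"
definition d_pphi :: "psfun \<Rightarrow> psfun" where
  "d_pphi F r ph pr pph = deriv (\<lambda>t. F r ph pr t) pph"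

definition poisson :: "psfun \<Rightarrow> psfun \<Rightarrow> psfun" where
  "poisson F G r ph pr pph =
     d_r F r ph pr pph * d_pr G r ph pr pph - d_pr F r ph pr pph * d_r G r ph pr pph
   + d_phi F r ph pr pph * d_pphi G r ph pr pph - d_pphi F r ph pr pph * d_phi G r ph pr pph"

definition dom_nb :: "real \<Rightarrow> (real \<times> real \<times> real \<times> real) set" where
  "dom_nb n = {(r, ph, pr, pph). r > 0 \<and> cos ((n - 1) * ph) \<noteq> 0}"

definition H_nb :: "real \<Rightarrow> real \<Rightarrow> real \<Rightarrow> real \<Rightarrow> psfun" where
  "H_nb n k0 k1 k2 r ph pr pph =
     (let kn = n - 1 in
      1/2 * r powr (2*n) * (pr^2 + pph^2 / r^2)
      + k0 / r powr (2*kn) * ((cos (kn*ph))^2 + 4 * (sin (kn*ph))^2)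
      + r powr (2*kn) * (k1 / (cos (kn*ph))^2)
      + k2 / r powr kn * sin (kn*ph))"

definition P1 :: "real \<Rightarrow> psfun" where
  "P1 n r ph pr pph = r powr n * (pr * cos ((n-1)*ph) + 1/r * pph * sin ((n-1)*ph))"

definition P2 :: "real \<Rightarrow> psfun" where
  "P2 n r ph pr pph = r powr n * (pr * sin ((n-1)*ph) - 1/r * pph * cos ((n-1)*ph))"

definition J_b1 :: "real \<Rightarrow> real \<Rightarrow> real \<Rightarrow> real \<Rightarrow> psfun" where
  "J_b1 n k0 k1 k2 r ph pr pph =
     (let kn = n - 1 in
      (P1 n r ph pr pph)^2 + 2*k0 / r powr (2*kn) * (cos (kn*ph))^2
      + 2*k1 * r powr (2*kn) * (1 / cos (kn*ph))^2)"

definition J_b2 :: "real \<Rightarrow> real \<Rightarrow> real \<Rightarrow> real \<Rightarrow> psfun" where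
  "J_b2 n k0 k1 k2 r ph pr pph =
     (let kn = n - 1 in
      (P2 n r ph pr pph)^2 + 8*k0 / r powr (2*kn) * (sin (kn*ph))^2
      + 2*k2 / r powr kn * sin (kn*ph))"

definition J_b3 :: "real \<Rightarrow> real \<Rightarrow> real \<Rightarrow> real \<Rightarrow> psfun" where
  "J_b3 n k0 k1 k2 r ph pr pph =
     (let kn = n - 1 in
      P1 n r ph pr pph * pph
      - k0 / r powr (3*kn) * cos (kn*ph) * sin (2*kn*ph)
      + k1 * r powr kn * (1 / cos (kn*ph))^3 * sin (2*kn*ph)
      - k2 / (2 * r powr (2*kn)) * (cos (kn*ph))^2)"

definition indep3_at :: "psfun \<Rightarrow> psfun \<Rightarrow> psfun \<Rightarrow> real \<times> real \<times> real \<times> real \<Rightarrow> bool" where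
  "indep3_at F G K p = (case p of (r, ph, pr, pph) \<Rightarrow>
     (\<forall>a b c::real.
        a * d_r F r ph pr pph + b * d_r G r ph pr pph + c * d_r K r ph pr pph = 0 \<and>
        a * d_phi F r ph pr pph + b * d_phi G r ph pr pph + c * d_phi K r ph pr pph = 0 \<and>
        a * d_pr F r ph pr pph + b * d_pr G r ph pr pph + c * d_pr K r ph pr pph = 0 \<and>
        a * d_pphi F r ph pr pph + b * d_pphi G r ph pr pph + c * d_pphi K r ph pr pph = 0
        \<longrightarrow> a = 0 \<and> b = 0 \<and> c = 0))"

definition func_indep3_on :: "psfun \<Rightarrow> psfun \<Rightarrow> psfun \<Rightarrow> (real \<times> real \<times> real \<times> real) set \<Rightarrow> bool" where
  "func_indep3_on F G K U = (U \<subseteq> closure {p \<in> U. indep3_at F G K p})"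

end

theory Submission
  imports Defs
begin

text \<open>Writing \<open>R = r^(n-1)\<close>, \<open>c = cos((n-1)\<phi>)\<close> and \<open>s = sin((n-1)\<phi>)\<close>, the Hamiltonian
  and the three integrals become rational functions of \<open>r, R, c, s, p_r, p_\<phi>\<close>, and the chain rule
  gives their partial derivatives in the same variables; each bracket \<open>{J_bj, H_nb}\<close> is then a
  rational function that vanishes identically modulo \<open>s\<^sup>2 + c\<^sup>2 = 1\<close>.
  For independence it suffices that the minor of the Jacobian of \<open>(J_b1, J_b2, J_b3)\<close> in the
  variables \<open>\<phi>, p_r, p_\<phi>\<close> does not vanish. As a function of \<open>p_r\<close> this minor is a quartic with
  leading coefficient \<open>-4(n-1) r\<^sup>5 R\<^sup>5 c\<^sup>2 s\<close>, so its fourth finite difference is nonzero whenever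
  \<open>s c \<noteq> 0\<close>; since such angles are dense, the minor is nonzero arbitrarily close to any point
  of the domain.\<close>

lemma powr_nat_mult:
  assumes "(r::real) > 0" shows "r powr (real m * a) = (r powr a) ^ m"
  using assms by (simp add: powr_powr[symmetric] powr_realpow mult.commute)

lemma powr_minus_one:
  assumes "(r::real) > 0" shows "r powr (a - 1) = r powr a / r"
  using assms by (simp add: powr_diff)

lemma powr_multiples:
  assumes "(r::real) > 0"
  shows "r powr (2*n) = r^2 * (r powr (n-1))^2"
    and "r powr (2*(n-1)) = (r powr (n-1))^2"
    and "r powr (3*(n-1)) = (r powr (n-1))^3"
  using powr_nat_mult[OF assms, of 2 "n-1"] powr_nat_mult[OF assms, of 3 "n-1"]
    powr_nat_mult[OF assms, of 2 n] assms
  by (simp_all add: powr_diff power_divide)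

lemma d_r_eqI:
  assumes "r > 0" "\<And>t. t > 0 \<Longrightarrow> F t ph pr pph = f t" "(f has_real_derivative D) (at r)"
  shows "d_r F r ph pr pph = D"
proof -
  have "eventually (\<lambda>t. F t ph pr pph = f t) (nhds r)"
    using eventually_nhds_in_open[of "{0<..}" r] assms(1,2) by (auto elim: eventually_mono)
  then show ?thesis
    unfolding d_r_def using deriv_cong_ev[of _ f r r] DERIV_imp_deriv[OF assms(3)] by simp
qed

lemma d_phi_eqI:
  assumes "\<And>t. F r t pr pph = f t" "(f has_real_derivative D) (at ph)"
  shows "d_phi F r ph pr pph = D"
  using assms DERIV_imp_deriv by (simp add: d_phi_def)

lemma d_pr_eqI:
  assumes "\<And>t. F r ph t pph = f t" "(f has_real_derivative D) (at pr)"
  shows "d_pr F r ph pr pph = D"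
  using assms DERIV_imp_deriv by (simp add: d_pr_def)

lemma d_pphi_eqI:
  assumes "\<And>t. F r ph pr t = f t" "(f has_real_derivative D) (at pph)"
  shows "d_pphi F r ph pr pph = D"
  using assms DERIV_imp_deriv by (simp add: d_pphi_def)

text \<open>In the reduced functions below the arguments \<open>R, c, s\<close> stand for \<open>r powr (n-1)\<close>,
  \<open>cos ((n-1)*ph)\<close> and \<open>sin ((n-1)*ph)\<close>.\<close>

definition P1_red :: "real \<Rightarrow> real \<Rightarrow> real \<Rightarrow> real \<Rightarrow> real \<Rightarrow> real \<Rightarrow> real" where
  "P1_red r R c s pr pph = R * (r*pr*c + pph * s)"

definition P2_red :: "real \<Rightarrow> real \<Rightarrow> real \<Rightarrow> real \<Rightarrow> real \<Rightarrow> real \<Rightarrow> real" where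
  "P2_red r R c s pr pph = R * (r*pr * s - pph*c)"

definition H_nb_red :: "real \<Rightarrow> real \<Rightarrow> real \<Rightarrow> real \<Rightarrow> real \<Rightarrow> real \<Rightarrow> real \<Rightarrow> real \<Rightarrow> real \<Rightarrow> real" where
  "H_nb_red k0 k1 k2 r R c s pr pph =
     1/2*r^2*R^2*pr^2 + 1/2*R^2*pph^2 + k0*(c^2 + 4 * s^2)/R^2 + k1*R^2/c^2 + k2 * s/R"

definition J_b1_red :: "real \<Rightarrow> real \<Rightarrow> real \<Rightarrow> real \<Rightarrow> real \<Rightarrow> real \<Rightarrow> real \<Rightarrow> real \<Rightarrow> real" where
  "J_b1_red k0 k1 r R c s pr pph = (P1_red r R c s pr pph)^2 + 2*k0*c^2/R^2 + 2*k1*R^2/c^2"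

definition J_b2_red :: "real \<Rightarrow> real \<Rightarrow> real \<Rightarrow> real \<Rightarrow> real \<Rightarrow> real \<Rightarrow> real \<Rightarrow> real \<Rightarrow> real" where
  "J_b2_red k0 k2 r R c s pr pph = (P2_red r R c s pr pph)^2 + 8*k0 * s^2/R^2 + 2*k2 * s/R"

definition J_b3_red :: "real \<Rightarrow> real \<Rightarrow> real \<Rightarrow> real \<Rightarrow> real \<Rightarrow> real \<Rightarrow> real \<Rightarrow> real \<Rightarrow> real \<Rightarrow> real" where
  "J_b3_red k0 k1 k2 r R c s pr pph =
     P1_red r R c s pr pph * pph - 2*k0 * s*c^2/R^3 + 2*k1*R * s/c^2 - k2*c^2/(2*R^2)"

lemma H_nb_reduced:
  assumes "r > 0"
  shows "H_nb n k0 k1 k2 r ph pr pph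
       = H_nb_red k0 k1 k2 r (r powr (n-1)) (cos ((n-1)*ph)) (sin ((n-1)*ph)) pr pph"
  unfolding H_nb_def H_nb_red_def Let_def powr_multiples[OF assms, of n]
  using assms by (simp add: power2_eq_square field_simps)

lemma P1_reduced:
  assumes "r > 0"
  shows "P1 n r ph pr pph = P1_red r (r powr (n-1)) (cos ((n-1)*ph)) (sin ((n-1)*ph)) pr pph"
  using assms by (simp add: P1_def P1_red_def powr_minus_one field_simps)

lemma P2_reduced:
  assumes "r > 0"
  shows "P2 n r ph pr pph = P2_red r (r powr (n-1)) (cos ((n-1)*ph)) (sin ((n-1)*ph)) pr pph"
  using assms by (simp add: P2_def P2_red_def powr_minus_one field_simps)

lemma J_b1_reduced:
  assumes "r > 0"
  shows "J_b1 n k0 k1 k2 r ph pr pph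
       = J_b1_red k0 k1 r (r powr (n-1)) (cos ((n-1)*ph)) (sin ((n-1)*ph)) pr pph"
  unfolding J_b1_def J_b1_red_def Let_def powr_multiples[OF assms, of n] P1_reduced[OF assms]
  by (simp add: power_one_over)

lemma J_b2_reduced:
  assumes "r > 0"
  shows "J_b2 n k0 k1 k2 r ph pr pph
       = J_b2_red k0 k2 r (r powr (n-1)) (cos ((n-1)*ph)) (sin ((n-1)*ph)) pr pph"
  unfolding J_b2_def J_b2_red_def Let_def powr_multiples[OF assms, of n] P2_reduced[OF assms]
  by simp

lemma J_b3_reduced:
  assumes "r > 0"
  shows "J_b3 n k0 k1 k2 r ph pr pph
       = J_b3_red k0 k1 k2 r (r powr (n-1)) (cos ((n-1)*ph)) (sin ((n-1)*ph)) pr pph"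
proof -
  have "sin (2*(n-1)*ph) = 2 * sin ((n-1)*ph) * cos ((n-1)*ph)"
    using sin_double[of "(n-1)*ph"] by (simp only: mult.assoc)
  then show ?thesis
    unfolding J_b3_def J_b3_red_def Let_def powr_multiples[OF assms, of n] P1_reduced[OF assms]
    by (cases "cos ((n-1)*ph) = 0") (simp_all add: power2_eq_square power3_eq_cube field_simps)
qed

lemma H_nb_partials:
  fixes n k0 k1 k2 r ph pr pph :: real
  defines "k \<equiv> n - 1" and "R \<equiv> r powr (n - 1)"
    and "c \<equiv> cos ((n - 1) * ph)" and "s \<equiv> sin ((n - 1) * ph)"
  assumes "r > 0" "c \<noteq> 0"
  shows "d_r (H_nb n k0 k1 k2) r ph pr pph =
      (k+1)*r*R^2*pr^2 + k*R^2*pph^2/r - 2*k*k0*(c^2 + 4 * s^2)/(r*R^2)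
        + 2*k*k1*R^2/(r*c^2) - k*k2 * s/(r*R)" (is ?dr)
    and "d_phi (H_nb n k0 k1 k2) r ph pr pph =
      6*k*k0 * s*c/R^2 + 2*k*k1*R^2 * s/c^3 + k*k2*c/R" (is ?dphi)
    and "d_pr (H_nb n k0 k1 k2) r ph pr pph = r^2*R^2*pr" (is ?dpr)
    and "d_pphi (H_nb n k0 k1 k2) r ph pr pph = R^2*pph" (is ?dpphi)
proof -
  have "R > 0" using \<open>r > 0\<close> by (simp add: R_def)
  then have nz: "r powr (n-1) \<noteq> 0" "(r powr (n-1))^2 \<noteq> 0" "2 * (r powr (n-1))^2 \<noteq> 0"
    "(r powr (n-1))^3 \<noteq> 0" "(cos ((n-1)*ph))^2 \<noteq> 0" "(cos ((n-1)*ph))^3 \<noteq> 0"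
    using \<open>c \<noteq> 0\<close> by (auto simp: R_def c_def)
  note F = H_nb_reduced and unfold_red = H_nb_red_def
  show ?dr
    apply (rule d_r_eqI[OF \<open>r > 0\<close>], erule F)
    apply (unfold unfold_red)
    apply (rule derivative_eq_intros refl \<open>r > 0\<close> nz)+
    using \<open>r > 0\<close> \<open>R > 0\<close> \<open>c \<noteq> 0\<close>
    by (simp only: powr_minus_one[OF \<open>r > 0\<close>, of "n-1"] flip: R_def c_def s_def)
      (simp add: k_def field_simps, algebra)
  show ?dphi
    apply (rule d_phi_eqI, rule F[OF \<open>r > 0\<close>])
    apply (unfold unfold_red)
    apply (rule derivative_eq_intros refl nz)+
    using \<open>R > 0\<close> \<open>c \<noteq> 0\<close>
    by (simp only: flip: R_def c_def s_def)
      (simp add: k_def field_simps, algebra)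
  show ?dpr
    apply (rule d_pr_eqI, rule F[OF \<open>r > 0\<close>])
    apply (unfold unfold_red)
    apply (rule derivative_eq_intros refl)+
    by (simp only: flip: R_def c_def s_def) (simp add: field_simps)
  show ?dpphi
    apply (rule d_pphi_eqI, rule F[OF \<open>r > 0\<close>])
    apply (unfold unfold_red)
    apply (rule derivative_eq_intros refl)+
    by (simp only: flip: R_def c_def s_def) (simp add: field_simps)
qed

lemma J_b1_partials:
  fixes n k0 k1 k2 r ph pr pph :: real
  defines "k \<equiv> n - 1" and "R \<equiv> r powr (n - 1)"
    and "c \<equiv> cos ((n - 1) * ph)" and "s \<equiv> sin ((n - 1) * ph)"
    and "P \<equiv> P1 n r ph pr pph"
  assumes "r > 0" "c \<noteq> 0"
  shows "d_r (J_b1 n k0 k1 k2) r ph pr pph =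
      2*P*((k+1)*R*pr*c + k*R*pph * s/r) - 4*k*k0*c^2/(r*R^2) + 4*k*k1*R^2/(r*c^2)" (is ?dr)
    and "d_phi (J_b1 n k0 k1 k2) r ph pr pph =
      2*P*(k*R*(pph*c - r*pr * s)) - 4*k*k0*c * s/R^2 + 4*k*k1*R^2 * s/c^3" (is ?dphi)
    and "d_pr (J_b1 n k0 k1 k2) r ph pr pph = 2*P*r*R*c" (is ?dpr)
    and "d_pphi (J_b1 n k0 k1 k2) r ph pr pph = 2*P*R * s" (is ?dpphi)
proof -
  have "R > 0" using \<open>r > 0\<close> by (simp add: R_def)
  then have nz: "r powr (n-1) \<noteq> 0" "(r powr (n-1))^2 \<noteq> 0" "2 * (r powr (n-1))^2 \<noteq> 0"
    "(r powr (n-1))^3 \<noteq> 0" "(cos ((n-1)*ph))^2 \<noteq> 0" "(cos ((n-1)*ph))^3 \<noteq> 0"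
    using \<open>c \<noteq> 0\<close> by (auto simp: R_def c_def)
  note F = J_b1_reduced and unfold_red = J_b1_red_def P1_red_def P2_red_def
  show ?dr
    apply (rule d_r_eqI[OF \<open>r > 0\<close>], erule F)
    apply (unfold unfold_red)
    apply (rule derivative_eq_intros refl \<open>r > 0\<close> nz)+
    using \<open>r > 0\<close> \<open>R > 0\<close> \<open>c \<noteq> 0\<close>
    by (simp only: P_def P1_reduced[OF \<open>r > 0\<close>] powr_minus_one[OF \<open>r > 0\<close>, of "n-1"]
        flip: R_def c_def s_def)
      (simp add: k_def P1_red_def P2_red_def field_simps, algebra)
  show ?dphi
    apply (rule d_phi_eqI, rule F[OF \<open>r > 0\<close>])
    apply (unfold unfold_red)
    apply (rule derivative_eq_intros refl nz)+
    using \<open>R > 0\<close> \<open>c \<noteq> 0\<close>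
    by (simp only: P_def P1_reduced[OF \<open>r > 0\<close>] flip: R_def c_def s_def)
      (simp add: k_def P1_red_def P2_red_def field_simps, algebra)
  show ?dpr
    apply (rule d_pr_eqI, rule F[OF \<open>r > 0\<close>])
    apply (unfold unfold_red)
    apply (rule derivative_eq_intros refl)+
    by (simp only: P_def P1_reduced[OF \<open>r > 0\<close>] flip: R_def c_def s_def)
      (simp add: P1_red_def P2_red_def field_simps)
  show ?dpphi
    apply (rule d_pphi_eqI, rule F[OF \<open>r > 0\<close>])
    apply (unfold unfold_red)
    apply (rule derivative_eq_intros refl)+
    by (simp only: P_def P1_reduced[OF \<open>r > 0\<close>] flip: R_def c_def s_def)
      (simp add: P1_red_def P2_red_def field_simps)
qed

lemma J_b2_partials:
  fixes n k0 k1 k2 r ph pr pph :: real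
  defines "k \<equiv> n - 1" and "R \<equiv> r powr (n - 1)"
    and "c \<equiv> cos ((n - 1) * ph)" and "s \<equiv> sin ((n - 1) * ph)"
    and "P \<equiv> P2 n r ph pr pph"
  assumes "r > 0" "c \<noteq> 0"
  shows "d_r (J_b2 n k0 k1 k2) r ph pr pph =
      2*P*((k+1)*R*pr * s - k*R*pph*c/r) - 16*k*k0 * s^2/(r*R^2) - 2*k*k2 * s/(r*R)" (is ?dr)
    and "d_phi (J_b2 n k0 k1 k2) r ph pr pph =
      2*P*(k*R*(r*pr*c + pph * s)) + 16*k*k0 * s*c/R^2 + 2*k*k2*c/R" (is ?dphi)
    and "d_pr (J_b2 n k0 k1 k2) r ph pr pph = 2*P*r*R * s" (is ?dpr)
    and "d_pphi (J_b2 n k0 k1 k2) r ph pr pph = -2*P*R*c" (is ?dpphi)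
proof -
  have "R > 0" using \<open>r > 0\<close> by (simp add: R_def)
  then have nz: "r powr (n-1) \<noteq> 0" "(r powr (n-1))^2 \<noteq> 0" "2 * (r powr (n-1))^2 \<noteq> 0"
    "(r powr (n-1))^3 \<noteq> 0" "(cos ((n-1)*ph))^2 \<noteq> 0" "(cos ((n-1)*ph))^3 \<noteq> 0"
    using \<open>c \<noteq> 0\<close> by (auto simp: R_def c_def)
  note F = J_b2_reduced and unfold_red = J_b2_red_def P1_red_def P2_red_def
  show ?dr
    apply (rule d_r_eqI[OF \<open>r > 0\<close>], erule F)
    apply (unfold unfold_red)
    apply (rule derivative_eq_intros refl \<open>r > 0\<close> nz)+
    using \<open>r > 0\<close> \<open>R > 0\<close> \<open>c \<noteq> 0\<close>
    by (simp only: P_def P2_reduced[OF \<open>r > 0\<close>] powr_minus_one[OF \<open>r > 0\<close>, of "n-1"]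
        flip: R_def c_def s_def)
      (simp add: k_def P1_red_def P2_red_def field_simps, algebra)
  show ?dphi
    apply (rule d_phi_eqI, rule F[OF \<open>r > 0\<close>])
    apply (unfold unfold_red)
    apply (rule derivative_eq_intros refl nz)+
    using \<open>R > 0\<close> \<open>c \<noteq> 0\<close>
    by (simp only: P_def P2_reduced[OF \<open>r > 0\<close>] flip: R_def c_def s_def)
      (simp add: k_def P1_red_def P2_red_def field_simps)
  show ?dpr
    apply (rule d_pr_eqI, rule F[OF \<open>r > 0\<close>])
    apply (unfold unfold_red)
    apply (rule derivative_eq_intros refl)+
    by (simp only: P_def P2_reduced[OF \<open>r > 0\<close>] flip: R_def c_def s_def)
      (simp add: P1_red_def P2_red_def field_simps)
  show ?dpphi
    apply (rule d_pphi_eqI, rule F[OF \<open>r > 0\<close>])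
    apply (unfold unfold_red)
    apply (rule derivative_eq_intros refl)+
    by (simp only: P_def P2_reduced[OF \<open>r > 0\<close>] flip: R_def c_def s_def)
      (simp add: P1_red_def P2_red_def field_simps)
qed

lemma J_b3_partials:
  fixes n k0 k1 k2 r ph pr pph :: real
  defines "k \<equiv> n - 1" and "R \<equiv> r powr (n - 1)"
    and "c \<equiv> cos ((n - 1) * ph)" and "s \<equiv> sin ((n - 1) * ph)"
    and "P \<equiv> P1 n r ph pr pph"
  assumes "r > 0" "c \<noteq> 0"
  shows "d_r (J_b3 n k0 k1 k2) r ph pr pph =
      ((k+1)*R*pr*c + k*R*pph * s/r)*pph + 6*k*k0 * s*c^2/(r*R^3) + 2*k*k1*R * s/(r*c^2)
        + k*k2*c^2/(r*R^2)" (is ?dr)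
    and "d_phi (J_b3 n k0 k1 k2) r ph pr pph =
      k*R*(pph*c - r*pr * s)*pph - 2*k*k0*(c^3 - 2 * s^2*c)/R^3 + 2*k*k1*R*(1/c + 2 * s^2/c^3)
        + k*k2*c * s/R^2" (is ?dphi)
    and "d_pr (J_b3 n k0 k1 k2) r ph pr pph = r*R*c*pph" (is ?dpr)
    and "d_pphi (J_b3 n k0 k1 k2) r ph pr pph = P + R * s*pph" (is ?dpphi)
proof -
  have "R > 0" using \<open>r > 0\<close> by (simp add: R_def)
  then have nz: "r powr (n-1) \<noteq> 0" "(r powr (n-1))^2 \<noteq> 0" "2 * (r powr (n-1))^2 \<noteq> 0"
    "(r powr (n-1))^3 \<noteq> 0" "(cos ((n-1)*ph))^2 \<noteq> 0" "(cos ((n-1)*ph))^3 \<noteq> 0"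
    using \<open>c \<noteq> 0\<close> by (auto simp: R_def c_def)
  note F = J_b3_reduced and unfold_red = J_b3_red_def P1_red_def P2_red_def
  show ?dr
    apply (rule d_r_eqI[OF \<open>r > 0\<close>], erule F)
    apply (unfold unfold_red)
    apply (rule derivative_eq_intros refl \<open>r > 0\<close> nz)+
    using \<open>r > 0\<close> \<open>R > 0\<close> \<open>c \<noteq> 0\<close>
    by (simp only: P_def P1_reduced[OF \<open>r > 0\<close>] powr_minus_one[OF \<open>r > 0\<close>, of "n-1"]
        flip: R_def c_def s_def)
      (simp add: k_def P1_red_def P2_red_def field_simps, algebra)
  show ?dphi
    apply (rule d_phi_eqI, rule F[OF \<open>r > 0\<close>])
    apply (unfold unfold_red)
    apply (rule derivative_eq_intros refl nz)+
    using \<open>R > 0\<close> \<open>c \<noteq> 0\<close>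
    by (simp only: P_def P1_reduced[OF \<open>r > 0\<close>] flip: R_def c_def s_def)
      (simp add: k_def P1_red_def P2_red_def field_simps, algebra)
  show ?dpr
    apply (rule d_pr_eqI, rule F[OF \<open>r > 0\<close>])
    apply (unfold unfold_red)
    apply (rule derivative_eq_intros refl)+
    by (simp only: P_def P1_reduced[OF \<open>r > 0\<close>] flip: R_def c_def s_def)
      (simp add: P1_red_def P2_red_def field_simps)
  show ?dpphi
    apply (rule d_pphi_eqI, rule F[OF \<open>r > 0\<close>])
    apply (unfold unfold_red)
    apply (rule derivative_eq_intros refl)+
    by (simp only: P_def P1_reduced[OF \<open>r > 0\<close>] flip: R_def c_def s_def)
      (simp add: P1_red_def P2_red_def field_simps)
qed

lemma poisson_J_b_H_nb:
  assumes "r > 0" "cos ((n - 1) * ph) \<noteq> 0"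
  shows "poisson (J_b1 n k0 k1 k2) (H_nb n k0 k1 k2) r ph pr pph = 0"
    and "poisson (J_b2 n k0 k1 k2) (H_nb n k0 k1 k2) r ph pr pph = 0"
    and "poisson (J_b3 n k0 k1 k2) (H_nb n k0 k1 k2) r ph pr pph = 0"
proof -
  define R c s where "R = r powr (n - 1)" and "c = cos ((n - 1) * ph)" and "s = sin ((n - 1) * ph)"
  have "R > 0" using assms(1) by (simp add: R_def)
  then have inv: "r * inverse r = 1" "R * inverse R = 1" "c * inverse c = 1"
    using assms by (auto simp: c_def)
  have "s^2 + c^2 = 1" by (simp add: s_def c_def)
  note reduce = P1_reduced[OF assms(1)] P2_reduced[OF assms(1)] P1_red_def P2_red_def
    R_def[symmetric] c_def[symmetric] s_def[symmetric]
    divide_inverse inverse_mult_distrib power_inverse[symmetric]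
    \<comment> \<open>\<open>algebra\<close> proves ring identities, so divisions are turned into inverses cancelled by \<open>inv\<close>\<close>
  show "poisson (J_b1 n k0 k1 k2) (H_nb n k0 k1 k2) r ph pr pph = 0"
    unfolding poisson_def J_b1_partials[OF assms] H_nb_partials[OF assms] reduce
    using inv \<open>s^2 + c^2 = 1\<close> by algebra
  show "poisson (J_b2 n k0 k1 k2) (H_nb n k0 k1 k2) r ph pr pph = 0"
    unfolding poisson_def J_b2_partials[OF assms] H_nb_partials[OF assms] reduce
    using inv \<open>s^2 + c^2 = 1\<close> by algebra
  show "poisson (J_b3 n k0 k1 k2) (H_nb n k0 k1 k2) r ph pr pph = 0"
    unfolding poisson_def J_b3_partials[OF assms] H_nb_partials[OF assms] reduce
    using inv \<open>s^2 + c^2 = 1\<close> by algebra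
qed

definition jacobian_minor_phi_p :: "psfun \<Rightarrow> psfun \<Rightarrow> psfun \<Rightarrow> psfun" where
  "jacobian_minor_phi_p F G K r ph pr pph =
     (let a1 = d_phi F r ph pr pph; b1 = d_phi G r ph pr pph; c1 = d_phi K r ph pr pph;
          a2 = d_pr F r ph pr pph;  b2 = d_pr G r ph pr pph;  c2 = d_pr K r ph pr pph;
          a3 = d_pphi F r ph pr pph; b3 = d_pphi G r ph pr pph; c3 = d_pphi K r ph pr pph
      in a1*(b2*c3 - c2*b3) - b1*(a2*c3 - c2*a3) + c1*(a2*b3 - b2*a3))"

lemma indep3_at_if_jacobian_minor_nonzero:
  assumes "jacobian_minor_phi_p F G K r ph pr pph \<noteq> 0"
  shows "indep3_at F G K (r, ph, pr, pph)"
  unfolding indep3_at_def prod.case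
proof (intro allI impI)
  fix a b g :: real
  assume "a * d_r F r ph pr pph + b * d_r G r ph pr pph + g * d_r K r ph pr pph = 0 \<and>
    a * d_phi F r ph pr pph + b * d_phi G r ph pr pph + g * d_phi K r ph pr pph = 0 \<and>
    a * d_pr F r ph pr pph + b * d_pr G r ph pr pph + g * d_pr K r ph pr pph = 0 \<and>
    a * d_pphi F r ph pr pph + b * d_pphi G r ph pr pph + g * d_pphi K r ph pr pph = 0"
  then have "a * jacobian_minor_phi_p F G K r ph pr pph = 0"
    "b * jacobian_minor_phi_p F G K r ph pr pph = 0"
    "g * jacobian_minor_phi_p F G K r ph pr pph = 0"
    unfolding jacobian_minor_phi_p_def Let_def by algebra+
  then show "a = 0 \<and> b = 0 \<and> g = 0" using assms by simp
qed

lemma jacobian_minor_J_fourth_difference: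
  fixes n k0 k1 k2 r ph pph x h :: real
  defines "m \<equiv> \<lambda>x. jacobian_minor_phi_p (J_b1 n k0 k1 k2) (J_b2 n k0 k1 k2) (J_b3 n k0 k1 k2) r ph x pph"
  assumes "r > 0" "cos ((n - 1) * ph) \<noteq> 0"
  shows "m x - 4 * m (x + h) + 6 * m (x + 2*h) - 4 * m (x + 3*h) + m (x + 4*h)
       = -96 * h^4 * (n - 1) * r^5 * (r powr (n - 1))^5 * (cos ((n - 1) * ph))^2 * sin ((n - 1) * ph)"
proof -
  define R c s where "R = r powr (n - 1)" and "c = cos ((n - 1) * ph)" and "s = sin ((n - 1) * ph)"
  have "R > 0" using assms(2) by (simp add: R_def)
  have inv: "R * inverse R = 1" "c * inverse c = 1" "r * inverse r = 1"
    using assms \<open>R > 0\<close> by (auto simp: c_def)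
  have "s^2 + c^2 = 1" by (simp add: s_def c_def)
  then show ?thesis
    unfolding m_def jacobian_minor_phi_p_def Let_def
      J_b1_partials[OF assms(2,3)] J_b2_partials[OF assms(2,3)] J_b3_partials[OF assms(2,3)]
      P1_reduced[OF assms(2)] P2_reduced[OF assms(2)]
      P1_red_def P2_red_def R_def[symmetric] c_def[symmetric] s_def[symmetric]
      divide_inverse inverse_mult_distrib power_inverse[symmetric]
    using inv by algebra
qed

lemma nonzero_near_if_fourth_difference_nonzero:
  fixes f :: "real \<Rightarrow> real"
  assumes "f x - 4 * f (x + h) + 6 * f (x + 2*h) - 4 * f (x + 3*h) + f (x + 4*h) \<noteq> 0" "h \<ge> 0"
  shows "\<exists>y. \<bar>y - x\<bar> \<le> 4*h \<and> f y \<noteq> 0"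
proof (rule ccontr)
  assume "\<nexists>y. \<bar>y - x\<bar> \<le> 4*h \<and> f y \<noteq> 0"
  then have "f (x + j*h) = 0" if "j \<in> {0,1,2,3,4}" for j :: real
    using that \<open>h \<ge> 0\<close> by (auto simp: abs_mult)
  from this[of 0] this[of 1] this[of 2] this[of 3] this[of 4] show False
    using assms(1) by simp
qed

lemma exists_near_sin_cos_nonzero:
  fixes k x e :: real
  assumes "k \<noteq> 0" "e > 0"
  shows "\<exists>y. \<bar>y - x\<bar> < e \<and> sin (k*y) \<noteq> 0 \<and> cos (k*y) \<noteq> 0"
proof -
  have "\<exists>y. \<bar>y - x\<bar> < e \<and> sin (2*k*y) \<noteq> 0"
  proof (cases "sin (2*k*x) = 0")
    case True
    define t where "t = min (\<bar>k\<bar> * e) (pi/2)"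
    have "0 < t" "t \<le> pi/2" "t \<le> \<bar>k\<bar> * e" using assms by (auto simp: t_def)
    then have "sin t > 0" using pi_gt_zero by (intro sin_gt_zero) auto
    have "cos (2*k*x) \<noteq> 0" using True sin_cos_squared_add[of "2*k*x"] by auto
    have "sin (2*k*(x + t/(2*k))) = sin (2*k*x) * cos t + cos (2*k*x) * sin t"
      using assms(1) by (simp add: distrib_left sin_add)
    then have "sin (2*k*(x + t/(2*k))) \<noteq> 0"
      using True \<open>cos (2*k*x) \<noteq> 0\<close> \<open>sin t > 0\<close> by simp
    moreover have "\<bar>t/(2*k)\<bar> < e"
      using assms \<open>0 < t\<close> \<open>t \<le> \<bar>k\<bar> * e\<close> by (simp add: abs_mult field_simps)
    ultimately show ?thesis by (intro exI[of _ "x + t/(2*k)"]) simp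
  qed (use assms in \<open>intro exI[of _ x], auto\<close>)
  then obtain y where "\<bar>y - x\<bar> < e" "sin (2*(k*y)) \<noteq> 0" by (auto simp: mult.assoc)
  then show ?thesis unfolding sin_double by auto
qed

lemma dist_change_phi_pr:
  "dist (r, ph', pr', pph) (r, ph, pr, pph) \<le> \<bar>ph' - ph\<bar> + \<bar>pr' - pr\<bar>"
  using sqrt_sum_squares_le_sum_abs[of "ph' - ph" "pr' - pr"]
  by (simp add: dist_Pair_Pair dist_real_def)

lemma jacobian_minor_J_nonzero_near:
  assumes "n \<noteq> 1" "r > 0" "cos ((n - 1) * ph) \<noteq> 0" "e > 0"
  shows "\<exists>ph' pr'. dist (r, ph', pr', pph) (r, ph, pr, pph) < e \<and> cos ((n - 1) * ph') \<noteq> 0 \<and>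
    jacobian_minor_phi_p (J_b1 n k0 k1 k2) (J_b2 n k0 k1 k2) (J_b3 n k0 k1 k2) r ph' pr' pph \<noteq> 0"
proof -
  obtain ph' where ph': "\<bar>ph' - ph\<bar> < e/2" "sin ((n - 1) * ph') \<noteq> 0" "cos ((n - 1) * ph') \<noteq> 0"
    using exists_near_sin_cos_nonzero[of "n - 1" "e/2"] assms by auto
  let ?m = "\<lambda>x. jacobian_minor_phi_p (J_b1 n k0 k1 k2) (J_b2 n k0 k1 k2) (J_b3 n k0 k1 k2) r ph' x pph"
  have "?m pr - 4 * ?m (pr + e/16) + 6 * ?m (pr + 2*(e/16)) - 4 * ?m (pr + 3*(e/16))
      + ?m (pr + 4*(e/16)) \<noteq> 0"
    unfolding jacobian_minor_J_fourth_difference[OF assms(2) ph'(3)]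
    using assms ph' by simp
  then obtain pr' where "\<bar>pr' - pr\<bar> \<le> e/4" "?m pr' \<noteq> 0"
    using nonzero_near_if_fourth_difference_nonzero[of ?m pr "e/16"] assms(4) by auto
  moreover have "dist (r, ph', pr', pph) (r, ph, pr, pph) < e"
    using dist_change_phi_pr[of r ph' pr' pph ph pr] ph'(1) \<open>\<bar>pr' - pr\<bar> \<le> e/4\<close> by linarith
  ultimately show ?thesis using ph'(3) by blast
qed

lemma J_func_indep3_on_dom_nb:
  assumes "n \<noteq> 1"
  shows "func_indep3_on (J_b1 n k0 k1 k2) (J_b2 n k0 k1 k2) (J_b3 n k0 k1 k2) (dom_nb n)"
  unfolding func_indep3_on_def
proof (intro subsetI)
  fix p assume "p \<in> dom_nb n"
  then obtain r ph pr pph where p: "p = (r, ph, pr, pph)" "r > 0" "cos ((n - 1) * ph) \<noteq> 0"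
    by (auto simp: dom_nb_def)
  show "p \<in> closure {q \<in> dom_nb n. indep3_at (J_b1 n k0 k1 k2) (J_b2 n k0 k1 k2) (J_b3 n k0 k1 k2) q}"
    unfolding closure_approachable p(1)
  proof (intro allI impI)
    fix e :: real assume "e > 0"
    with jacobian_minor_J_nonzero_near[OF assms p(2,3)] obtain ph' pr' where
      "dist (r, ph', pr', pph) (r, ph, pr, pph) < e" "cos ((n - 1) * ph') \<noteq> 0"
      "jacobian_minor_phi_p (J_b1 n k0 k1 k2) (J_b2 n k0 k1 k2) (J_b3 n k0 k1 k2) r ph' pr' pph \<noteq> 0"
      by blast
    with \<open>r > 0\<close> show "\<exists>q\<in>{q \<in> dom_nb n. indep3_at (J_b1 n k0 k1 k2) (J_b2 n k0 k1 k2) (J_b3 n k0 k1 k2) q}.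
        dist q (r, ph, pr, pph) < e"
      by (intro bexI[of _ "(r, ph', pr', pph)"]) (auto simp: dom_nb_def indep3_at_if_jacobian_minor_nonzero)
  qed
qed

theorem mainTheorem5:
  fixes n k0 k1 k2 :: real
  assumes "n \<noteq> 1"
  shows "(\<forall>(r, ph, pr, pph) \<in> dom_nb n.
            poisson (J_b1 n k0 k1 k2) (H_nb n k0 k1 k2) r ph pr pph = 0 \<and>
            poisson (J_b2 n k0 k1 k2) (H_nb n k0 k1 k2) r ph pr pph = 0 \<and>
            poisson (J_b3 n k0 k1 k2) (H_nb n k0 k1 k2) r ph pr pph = 0)
       \<and> func_indep3_on (J_b1 n k0 k1 k2) (J_b2 n k0 k1 k2) (J_b3 n k0 k1 k2) (dom_nb n)"
  using poisson_J_b_H_nb J_func_indep3_on_dom_nb[OF assms]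
  by (auto simp: dom_nb_def)

end
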